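(* The following are derivable in $\mathrm{CL}^{\mathrm{FI}}$. (i) For all $C\subseteq N$, $\varphi\in\mathcal{L}_{\mathrm{CL}^{\mathrm{FI}}}$: $\vdash\mathrm{FI}_C(\varphi)\leftrightarrow\mathrm{FI}_C(\neg\varphi)$. (ii) For all $C\subseteq D\subseteq N$ and $\varphi$: $\vdash\mathrm{FI}_D(\varphi)\to\mathrm{FI}_C(\varphi)$. (iii) If $\varphi$ is a formula with $\vdash_{\mathrm{CL}}[N]\varphi\vee[N]\neg\varphi$, then $\vdash_{\mathrm{CL}^{\mathrm{FI}}}\neg\mathrm{FI}_N(\varphi)$. (iv) For all $C\subseteq N$ and formulas $\varphi,\chi,\psi$: if $\vdash_{\mathrm{CL}^{\mathrm{FI}}}\varphi\to\chi$ and $\vdash_{\mathrm{CL}^{\mathrm{FI}}}\chi\to\psi$, then $\vdash_{\mathrm{CL}^{\mathrm{FI}}}(\mathrm{FI}_C(\varphi)\wedge\mathrm{FI}_C(\psi))\to\mathrm{FI}_C(\chi)$.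
   Context: $N=\{1,\dots,n\}$ is a finite set of agents, $\mathrm{Prop}$ a countable set of atoms. $\mathcal{L}_{\mathrm{CL}}$: $\varphi ::= p\mid\neg\varphi\mid(\varphi\wedge\psi)\mid[C]\varphi$; $\mathcal{L}_{\mathrm{CL}^{\mathrm{FI}}}$ additionally has $\mathrm{FI}_C(\varphi)$ for $C\subseteq N$ as a primitive modality. Coalition Logic $\mathrm{CL}$ (Pauly's axiomatization) over $\mathcal{L}_{\mathrm{CL}}$ has: all propositional tautologies; $(\bot)$ $\neg[C]\bot$; $(\top)$ $[C]\top$; $(N)$ $\neg[\emptyset]\neg\varphi\to[N]\varphi$; $(M)$ $[C](\varphi\wedge\psi)\to[C]\varphi$; $(S)$ $[C_1]\varphi_1\wedge[C_2]\varphi_2\to[C_1\cup C_2](\varphi_1\wedge\varphi_2)$ for $C_1\cap C_2=\emptyset$; rules modus ponens and (RE) from $\varphi\leftrightarrow\psi$ infer $[C]\varphi\leftrightarrow[C]\psi$. The system $\mathrm{CL}^{\mathrm{FI}}$ consists of all these axiom schemes and rules instantiated over $\mathcal{L}_{\mathrm{CL}^{\mathrm{FI}}}$, plus the axiom $(\mathrm{Def}\text{-}\mathrm{FI})$: $\mathrm{FI}_C(\varphi)\leftrightarrow(\neg[C]\varphi\wedge\neg[C]\neg\varphi)$. *)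

theory Defs
  imports Main
begin

text \<open>Agents are the elements of a finite type 'ag (so N = UNIV); atoms are natural numbers
(a countable set). A single datatype covers L_CL^FI; L_CL is its FI-free fragment.\<close>

datatype 'ag form =
    Atom nat
  | Neg "'ag form"
  | And "'ag form" "'ag form"
  | Coal "'ag set" "'ag form"
  | FI "'ag set" "'ag form"

fun fi_free :: "'ag form \<Rightarrow> bool" where
  "fi_free (Atom p) = True"
| "fi_free (Neg a) = fi_free a"
| "fi_free (And a b) = (fi_free a \<and> fi_free b)"
| "fi_free (Coal C a) = fi_free a"
| "fi_free (FI C a) = False"

definition Or :: "'ag form \<Rightarrow> 'ag form \<Rightarrow> 'ag form" where
  "Or a b = Neg (And (Neg a) (Neg b))"

definition Imp :: "'ag form \<Rightarrow> 'ag form \<Rightarrow> 'ag form" where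
  "Imp a b = Neg (And a (Neg b))"

definition Iff :: "'ag form \<Rightarrow> 'ag form \<Rightarrow> 'ag form" where
  "Iff a b = And (Imp a b) (Imp b a)"

definition Top :: "'ag form" where
  "Top = Neg (And (Atom 0) (Neg (Atom 0)))"

definition Bot :: "'ag form" where
  "Bot = Neg Top"

fun peval :: "('ag form \<Rightarrow> bool) \<Rightarrow> 'ag form \<Rightarrow> bool" where
  "peval v (Atom p) = v (Atom p)"
| "peval v (Neg a) = (\<not> peval v a)"
| "peval v (And a b) = (peval v a \<and> peval v b)"
| "peval v (Coal C a) = v (Coal C a)"
| "peval v (FI C a) = v (FI C a)"

definition tautology :: "'ag form \<Rightarrow> bool" where
  "tautology \<phi> = (\<forall>v. peval v \<phi>)"

inductive CL_prv :: "'ag form \<Rightarrow> bool" where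
  CL_taut: "fi_free \<phi> \<Longrightarrow> tautology \<phi> \<Longrightarrow> CL_prv \<phi>"
| CL_bot: "CL_prv (Neg (Coal C Bot))"
| CL_top: "CL_prv (Coal C Top)"
| CL_N: "fi_free \<phi> \<Longrightarrow> CL_prv (Imp (Neg (Coal {} (Neg \<phi>))) (Coal UNIV \<phi>))"
| CL_M: "fi_free \<phi> \<Longrightarrow> fi_free \<psi> \<Longrightarrow> CL_prv (Imp (Coal C (And \<phi> \<psi>)) (Coal C \<phi>))"
| CL_S: "fi_free \<phi>1 \<Longrightarrow> fi_free \<phi>2 \<Longrightarrow> C1 \<inter> C2 = {} \<Longrightarrow>
     CL_prv (Imp (And (Coal C1 \<phi>1) (Coal C2 \<phi>2)) (Coal (C1 \<union> C2) (And \<phi>1 \<phi>2)))"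
| CL_MP: "CL_prv \<phi> \<Longrightarrow> CL_prv (Imp \<phi> \<psi>) \<Longrightarrow> CL_prv \<psi>"
| CL_RE: "CL_prv (Iff \<phi> \<psi>) \<Longrightarrow> CL_prv (Iff (Coal C \<phi>) (Coal C \<psi>))"

inductive CLFI_prv :: "'ag form \<Rightarrow> bool" where
  FI_taut: "tautology \<phi> \<Longrightarrow> CLFI_prv \<phi>"
| FI_bot: "CLFI_prv (Neg (Coal C Bot))"
| FI_top: "CLFI_prv (Coal C Top)"
| FI_N: "CLFI_prv (Imp (Neg (Coal {} (Neg \<phi>))) (Coal UNIV \<phi>))"
| FI_M: "CLFI_prv (Imp (Coal C (And \<phi> \<psi>)) (Coal C \<phi>))"
| FI_S: "C1 \<inter> C2 = {} \<Longrightarrow>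
     CLFI_prv (Imp (And (Coal C1 \<phi>1) (Coal C2 \<phi>2)) (Coal (C1 \<union> C2) (And \<phi>1 \<phi>2)))"
| FI_MP: "CLFI_prv \<phi> \<Longrightarrow> CLFI_prv (Imp \<phi> \<psi>) \<Longrightarrow> CLFI_prv \<psi>"
| FI_RE: "CLFI_prv (Iff \<phi> \<psi>) \<Longrightarrow> CLFI_prv (Iff (Coal C \<phi>) (Coal C \<psi>))"
| FI_Def: "CLFI_prv (Iff (FI C \<phi>) (And (Neg (Coal C \<phi>)) (Neg (Coal C (Neg \<phi>)))))"

end

theory Submission
  imports Defs
begin

text \<open>Each item is a propositional consequence of Def-FI together with facts about the
coalition modality: (i) RE applied to \<not>\<not>\<phi> \<leftrightarrow> \<phi>; (ii) [C]a \<rightarrow> [D]a for C \<subseteq> D, which is S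
applied to [C]a and [D - C]\<top>; (iii) a CL-proof of [N]\<phi> \<or> [N]\<not>\<phi> is also a CL^FI-proof;
(iv) the monotonicity rule "from a \<rightarrow> b infer [C]a \<rightarrow> [C]b" (RE and M, via a \<leftrightarrow> b \<and> a) turns
\<phi> \<rightarrow> \<chi> \<rightarrow> \<psi> into [C]\<chi> \<rightarrow> [C]\<psi> and [C]\<not>\<chi> \<rightarrow> [C]\<not>\<phi>, so \<not>[C]\<psi> and \<not>[C]\<not>\<phi> yield
\<not>[C]\<chi> and \<not>[C]\<not>\<chi>.\<close>

lemmas connective_defs = Imp_def Iff_def Or_def Top_def Bot_def

lemma CL_prv_imp_CLFI_prv: "CL_prv \<phi> \<Longrightarrow> CLFI_prv \<phi>"
  by (induction rule: CL_prv.induct) (auto intro: CLFI_prv.intros)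

lemma CLFI_prv_Coal_mono:
  assumes "CLFI_prv (Imp a b)"
  shows "CLFI_prv (Imp (Coal C a) (Coal C b))"
proof -
  \<comment> \<open>elim FI_MP turns each used fact into an antecedent; what remains is a tautology.\<close>
  have "CLFI_prv (Iff a (And b a))"
    using assms by (elim FI_MP) (auto intro!: FI_taut simp: tautology_def connective_defs)
  then have "CLFI_prv (Iff (Coal C a) (Coal C (And b a)))"
    by (rule FI_RE)
  then show ?thesis
    using FI_M[of C b a]
    by (elim FI_MP) (auto intro!: FI_taut simp: tautology_def connective_defs)
qed

lemma CLFI_prv_Coal_subset:
  assumes "C \<subseteq> D"
  shows "CLFI_prv (Imp (Coal C a) (Coal D a))"
proof -
  have "C \<union> (D - C) = D" and "C \<inter> (D - C) = {}"
    using assms by blast+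
  then have S: "CLFI_prv (Imp (And (Coal C a) (Coal (D - C) Top)) (Coal D (And a Top)))"
    using FI_S[of C "D - C" a Top] by simp
  have "CLFI_prv (Iff (And a Top) a)"
    by (rule FI_taut) (auto simp: tautology_def connective_defs)
  then have "CLFI_prv (Iff (Coal D (And a Top)) (Coal D a))"
    by (rule FI_RE)
  then show ?thesis
    using S FI_top[of "D - C"]
    by (elim FI_MP) (auto intro!: FI_taut simp: tautology_def connective_defs)
qed

lemma CLFI_prv_FI_Neg_iff: "CLFI_prv (Iff (FI C \<phi>) (FI C (Neg \<phi>)))"
proof -
  have "CLFI_prv (Iff (Neg (Neg \<phi>)) \<phi>)"
    by (rule FI_taut) (auto simp: tautology_def connective_defs)
  then have "CLFI_prv (Iff (Coal C (Neg (Neg \<phi>))) (Coal C \<phi>))"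
    by (rule FI_RE)
  then show ?thesis
    using FI_Def[of C \<phi>] FI_Def[of C "Neg \<phi>"]
    by (elim FI_MP) (auto intro!: FI_taut simp: tautology_def connective_defs)
qed

lemma CLFI_prv_FI_antimono:
  assumes "C \<subseteq> D"
  shows "CLFI_prv (Imp (FI D \<phi>) (FI C \<phi>))"
  using FI_Def[of C \<phi>] FI_Def[of D \<phi>]
    CLFI_prv_Coal_subset[OF assms, of \<phi>] CLFI_prv_Coal_subset[OF assms, of "Neg \<phi>"]
  by (elim FI_MP) (auto intro!: FI_taut simp: tautology_def connective_defs)

lemma CLFI_prv_not_FI_UNIV_if_determined:
  assumes "CL_prv (Or (Coal UNIV \<phi>) (Coal UNIV (Neg \<phi>)))"
  shows "CLFI_prv (Neg (FI UNIV \<phi>))"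
  using FI_Def[of UNIV \<phi>] CL_prv_imp_CLFI_prv[OF assms]
  by (elim FI_MP) (auto intro!: FI_taut simp: tautology_def connective_defs)

lemma CLFI_prv_FI_between:
  assumes "CLFI_prv (Imp \<phi> \<chi>)" and "CLFI_prv (Imp \<chi> \<psi>)"
  shows "CLFI_prv (Imp (And (FI C \<phi>) (FI C \<psi>)) (FI C \<chi>))"
proof -
  have "CLFI_prv (Imp (Neg \<chi>) (Neg \<phi>))"
    using assms(1)
    by (elim FI_MP) (auto intro!: FI_taut simp: tautology_def connective_defs)
  then have "CLFI_prv (Imp (Coal C (Neg \<chi>)) (Coal C (Neg \<phi>)))"
    by (rule CLFI_prv_Coal_mono)
  then show ?thesis
    using FI_Def[of C \<phi>] FI_Def[of C \<psi>] FI_Def[of C \<chi>]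
      CLFI_prv_Coal_mono[OF assms(2), of C]
    by (elim FI_MP) (auto intro!: FI_taut simp: tautology_def connective_defs)
qed

theorem mainTheorem16:
  shows "(\<forall>(C::'ag::finite set) \<phi>. CLFI_prv (Iff (FI C \<phi>) (FI C (Neg \<phi>))))
    \<and> (\<forall>(C::'ag set) D \<phi>. C \<subseteq> D \<longrightarrow> CLFI_prv (Imp (FI D \<phi>) (FI C \<phi>)))
    \<and> (\<forall>\<phi>::'ag form. fi_free \<phi> \<longrightarrow> CL_prv (Or (Coal UNIV \<phi>) (Coal UNIV (Neg \<phi>)))
          \<longrightarrow> CLFI_prv (Neg (FI UNIV \<phi>)))
    \<and> (\<forall>(C::'ag set) \<phi> \<chi> \<psi>. CLFI_prv (Imp \<phi> \<chi>) \<longrightarrow> CLFI_prv (Imp \<chi> \<psi>)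
          \<longrightarrow> CLFI_prv (Imp (And (FI C \<phi>) (FI C \<psi>)) (FI C \<chi>)))"
  by (intro conjI allI impI CLFI_prv_FI_Neg_iff CLFI_prv_FI_antimono
      CLFI_prv_not_FI_UNIV_if_determined CLFI_prv_FI_between)

end
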